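(* Let $1\le p\le2$, $\epsilon>0$, and $1\le k\le n$. Let $x,\widetilde x\in\mathbb{R}^n$ satisfy $$\|\widetilde x-x\|_p\le\epsilon\,k^{1/p-1}\|x_k-x\|_1 .$$ Then $$\|\widetilde x_k-x\|_1\le(1+3\epsilon)\,\|x_k-x\|_1 .$$
   Context: For $g\in\mathbb{R}^n$, $g_k$ denotes the vector obtained from $g$ by keeping its $k$ entries of largest magnitude (ties broken lexicographically) and setting all other entries to $0$; it is a best $k$-term approximation of $g$ in any $\ell_q$ norm. *)

theory Defs
  imports Complex_Main
begin

text \<open>Vectors in R^n are represented as functions nat => real; only the
entries with index i < n matter.\<close>

definition lpnorm :: "nat \<Rightarrow> real \<Rightarrow> (nat \<Rightarrow> real) \<Rightarrow> real" where
  "lpnorm n p g = (\<Sum>i<n. \<bar>g i\<bar> powr p) powr (1 / p)"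

definition l1norm :: "nat \<Rightarrow> (nat \<Rightarrow> real) \<Rightarrow> real" where
  "l1norm n g = (\<Sum>i<n. \<bar>g i\<bar>)"

definition rank :: "nat \<Rightarrow> (nat \<Rightarrow> real) \<Rightarrow> nat \<Rightarrow> nat" where
  "rank n g i = card {j. j < n \<and> (\<bar>g j\<bar> > \<bar>g i\<bar> \<or> (\<bar>g j\<bar> = \<bar>g i\<bar> \<and> j < i))}"

definition head :: "nat \<Rightarrow> nat \<Rightarrow> (nat \<Rightarrow> real) \<Rightarrow> nat \<Rightarrow> real" where
  "head n k g i = (if i < n \<and> rank n g i < k then g i else 0)"

end

theory Submission imports Defs "HOL-Analysis.Convex" begin

(*
  Write S and T for the index sets of the k largest entries of xt and of x,
  h = xt - x, and sigma = ||x_k - x||_1, the l_1 mass of x outside T.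
  The error ||xt_k - x||_1 consists of |h| on S plus |x| off S.  Off S we trade
  the part T - S against S - T: both have the same size, and every entry of xt
  on S - T dominates every entry of xt on T - S.  Moving between x and xt on
  these two sets costs |h| twice, so the error is at most sigma plus the
  l_1 mass of h on three sets of size at most k (S, T - S and S - T).
  By Hoelder, the l_1 mass of h on a set of size k is at most
  k^(1-1/p) ||h||_p, which the hypothesis bounds by eps * sigma.
*)

definition precedes :: "(nat \<Rightarrow> real) \<Rightarrow> nat \<Rightarrow> nat \<Rightarrow> bool" where
  "precedes g j i \<longleftrightarrow> \<bar>g j\<bar> > \<bar>g i\<bar> \<or> (\<bar>g j\<bar> = \<bar>g i\<bar> \<and> j < i)"

definition top_indices :: "nat \<Rightarrow> nat \<Rightarrow> (nat \<Rightarrow> real) \<Rightarrow> nat set" where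
  "top_indices n k g = {i. i < n \<and> rank n g i < k}"

lemma rank_precedes: "rank n g i = card {j. j < n \<and> precedes g j i}"
  unfolding rank_def precedes_def by simp

lemma rank_strict_mono:
  assumes "j < n" "precedes g j i"
  shows "rank n g j < rank n g i"
proof -
  have "{l. l < n \<and> precedes g l j} \<subset> {l. l < n \<and> precedes g l i}"
    using assms unfolding precedes_def by auto
  then show ?thesis unfolding rank_precedes by (intro psubset_card_mono) auto
qed

lemma rank_bij: "bij_betw (rank n g) {..<n} {..<n}"
proof -
  have inj: "inj_on (rank n g) {..<n}"
    unfolding inj_on_def
    by (metis rank_strict_mono precedes_def lessThan_iff less_irrefl linorder_neqE)
  have "rank n g i < n" if "i < n" for i
  proof -
    have "{l. l < n \<and> precedes g l i} \<subseteq> {..<n} - {i}" unfolding precedes_def by auto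
    then have "card {l. l < n \<and> precedes g l i} \<le> card ({..<n} - {i})" by (intro card_mono) auto
    then show ?thesis unfolding rank_precedes using that by simp
  qed
  then have "rank n g ` {..<n} \<subseteq> {..<n}" by auto
  moreover have "card (rank n g ` {..<n}) = card {..<n}" using inj card_image by blast
  ultimately have "rank n g ` {..<n} = {..<n}" by (intro card_subset_eq) auto
  with inj show ?thesis by (simp add: bij_betw_def)
qed

lemma top_indices_subset: "top_indices n k g \<subseteq> {..<n}"
  unfolding top_indices_def by auto

lemma card_top_indices:
  assumes "k \<le> n"
  shows "card (top_indices n k g) = k"
proof -
  have "rank n g ` top_indices n k g = {..<k}"
  proof
    show "{..<k} \<subseteq> rank n g ` top_indices n k g"
    proof
      fix r assume "r \<in> {..<k}"
      then have "r \<in> rank n g ` {..<n}"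
        using rank_bij[of n g] assms unfolding bij_betw_def by auto
      then obtain i where "i < n" "rank n g i = r" by auto
      with \<open>r \<in> {..<k}\<close> show "r \<in> rank n g ` top_indices n k g"
        unfolding top_indices_def by auto
    qed
  qed (auto simp: top_indices_def)
  then have "bij_betw (rank n g) (top_indices n k g) {..<k}"
    by (rule bij_betw_subset[OF rank_bij top_indices_subset])
  then show ?thesis by (simp add: bij_betw_same_card)
qed

lemma top_indices_dominate:
  assumes "i \<in> top_indices n k g" "j < n" "j \<notin> top_indices n k g"
  shows "\<bar>g j\<bar> \<le> \<bar>g i\<bar>"
proof (rule ccontr)
  assume "\<not> ?thesis"
  then have "rank n g j < rank n g i"
    using assms(2) by (intro rank_strict_mono) (auto simp: precedes_def)
  then show False using assms unfolding top_indices_def by auto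
qed

lemma l1norm_head_error:
  "l1norm n (\<lambda>i. head n k g i - x i)
     = (\<Sum>i\<in>top_indices n k g. \<bar>g i - x i\<bar>) + (\<Sum>i\<in>{..<n} - top_indices n k g. \<bar>x i\<bar>)"
proof -
  have "l1norm n (\<lambda>i. head n k g i - x i)
          = (\<Sum>i<n. if i \<in> top_indices n k g then \<bar>g i - x i\<bar> else \<bar>x i\<bar>)"
    unfolding l1norm_def head_def top_indices_def by (intro sum.cong) auto
  also have "\<dots> = (\<Sum>i\<in>top_indices n k g. \<bar>g i - x i\<bar>)
                  + (\<Sum>i\<in>{..<n} - top_indices n k g. \<bar>x i\<bar>)"
    using top_indices_subset[of n k g]
    by (simp add: sum.If_cases Int_absorb1 Diff_eq Int_commute)
  finally show ?thesis .
qed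

text \<open>It is Jensen's inequality for t^p, which the
  library states as convexity on the open half-line only.\<close>
lemma l1_le_card_powr_lp_nonzero:
  fixes f :: "'a \<Rightarrow> real"
  assumes "finite A" "A \<noteq> {}" "p \<ge> 1" "\<And>i. i \<in> A \<Longrightarrow> f i \<noteq> 0"
  shows "(\<Sum>i\<in>A. \<bar>f i\<bar>) \<le> real (card A) powr (1 - 1/p) * (\<Sum>i\<in>A. \<bar>f i\<bar> powr p) powr (1/p)"
proof -
  define m where "m = real (card A)"
  define a where "a = (\<Sum>i\<in>A. \<bar>f i\<bar>)"
  define Q where "Q = (\<Sum>i\<in>A. \<bar>f i\<bar> powr p)"
  have m_pos: "m > 0" using assms(1,2) by (simp add: m_def card_gt_0_iff)
  have a_nonneg: "a \<ge> 0" unfolding a_def by (simp add: sum_nonneg)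
  have "(\<lambda>t. t powr p) (\<Sum>i\<in>A. (1/m) *\<^sub>R \<bar>f i\<bar>) \<le> (\<Sum>i\<in>A. (1/m) * (\<bar>f i\<bar> powr p))"
    by (rule convex_on_sum[OF assms(1,2) powr_convex[OF assms(3)]])
       (use m_pos assms(4) in \<open>auto simp: m_def\<close>)
  then have jensen: "(a/m) powr p \<le> Q/m"
    unfolding a_def Q_def by (simp add: sum_distrib_left[symmetric] sum_divide_distrib[symmetric])
  have "a/m = ((a/m) powr p) powr (1/p)" using assms a_nonneg m_pos by (simp add: powr_powr)
  also have "\<dots> \<le> (Q/m) powr (1/p)" using jensen assms a_nonneg m_pos by (intro powr_mono2) auto
  also have "\<dots> = Q powr (1/p) / m powr (1/p)"
    using m_pos by (simp add: powr_divide Q_def sum_nonneg)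
  finally have "a \<le> m * (Q powr (1/p) / m powr (1/p))" using m_pos by (simp add: field_simps)
  also have "\<dots> = m powr (1 - 1/p) * Q powr (1/p)" using m_pos by (simp add: powr_diff field_simps)
  finally show ?thesis unfolding a_def Q_def m_def .
qed

text \<open>The same inequality for arbitrary vectors: zero entries contribute to
  neither sum and only shrink the counting factor.\<close>
lemma l1_le_card_powr_lp:
  fixes f :: "'a \<Rightarrow> real"
  assumes "finite A" "p \<ge> 1"
  shows "(\<Sum>i\<in>A. \<bar>f i\<bar>) \<le> real (card A) powr (1 - 1/p) * (\<Sum>i\<in>A. \<bar>f i\<bar> powr p) powr (1/p)"
proof -
  define A' where "A' = {i\<in>A. f i \<noteq> 0}"
  have fin: "finite A'" and A'_sub: "A' \<subseteq> A" using assms(1) unfolding A'_def by auto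
  have l1_eq: "(\<Sum>i\<in>A. \<bar>f i\<bar>) = (\<Sum>i\<in>A'. \<bar>f i\<bar>)"
    unfolding A'_def using assms by (intro sum.mono_neutral_right) auto
  have lp_eq: "(\<Sum>i\<in>A. \<bar>f i\<bar> powr p) = (\<Sum>i\<in>A'. \<bar>f i\<bar> powr p)"
    unfolding A'_def using assms by (intro sum.mono_neutral_right) auto
  show ?thesis
  proof (cases "A' = {}")
    case True then show ?thesis using l1_eq by (simp add: sum_nonneg)
  next
    case False
    have "(\<Sum>i\<in>A'. \<bar>f i\<bar>) \<le> real (card A') powr (1 - 1/p) * (\<Sum>i\<in>A'. \<bar>f i\<bar> powr p) powr (1/p)"
      using fin False assms(2) by (rule l1_le_card_powr_lp_nonzero) (simp add: A'_def)
    also have "\<dots> \<le> real (card A) powr (1 - 1/p) * (\<Sum>i\<in>A'. \<bar>f i\<bar> powr p) powr (1/p)"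
      using card_mono[OF assms(1) A'_sub] False fin assms(2)
      by (intro mult_right_mono powr_mono2) (auto simp: card_gt_0_iff)
    finally show ?thesis using l1_eq lp_eq by simp
  qed
qed

lemma sum_le_sum_dominating:
  fixes u :: "'a \<Rightarrow> real"
  assumes "finite B" "finite C" "card B = card C" "\<And>i j. i \<in> B \<Longrightarrow> j \<in> C \<Longrightarrow> u i \<le> u j"
  shows "(\<Sum>i\<in>B. u i) \<le> (\<Sum>j\<in>C. u j)"
proof (cases "card B = 0")
  case True then show ?thesis using assms by simp
next
  case False
  have "real (card C) * (\<Sum>i\<in>B. u i) = (\<Sum>i\<in>B. \<Sum>j\<in>C. u i)" by (simp add: sum_distrib_left)
  also have "\<dots> \<le> (\<Sum>i\<in>B. \<Sum>j\<in>C. u j)" using assms by (intro sum_mono) auto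
  also have "\<dots> = real (card B) * (\<Sum>j\<in>C. u j)" by simp
  finally show ?thesis using False assms by simp
qed

lemma head_error_perturbation:
  fixes n k :: nat and x xt :: "nat \<Rightarrow> real"
  defines "S \<equiv> top_indices n k xt" and "T \<equiv> top_indices n k x" and "h \<equiv> \<lambda>i. \<bar>xt i - x i\<bar>"
  assumes "k \<le> n"
  shows "l1norm n (\<lambda>i. head n k xt i - x i)
           \<le> l1norm n (\<lambda>i. head n k x i - x i)
              + (\<Sum>i\<in>S. h i) + (\<Sum>i\<in>T - S. h i) + (\<Sum>i\<in>S - T. h i)"
proof -
  define R where "R = {..<n} - (S \<union> T)"
  have S_sub: "S \<subseteq> {..<n}" and T_sub: "T \<subseteq> {..<n}"
    unfolding S_def T_def by (rule top_indices_subset)+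
  then have fin: "finite S" "finite T" "finite R" unfolding R_def by (auto intro: finite_subset)
  have "card S = card T" unfolding S_def T_def using card_top_indices assms by simp
  then have same_size: "card (T - S) = card (S - T)"
    using fin by (metis card_Diff_subset_Int Int_commute finite_Int)
  have off_S: "(\<Sum>i\<in>{..<n} - S. \<bar>x i\<bar>) = (\<Sum>i\<in>R. \<bar>x i\<bar>) + (\<Sum>i\<in>T - S. \<bar>x i\<bar>)"
  proof -
    have "{..<n} - S = R \<union> (T - S)" using T_sub unfolding R_def by auto
    then show ?thesis using fin by (simp add: sum.union_disjoint R_def Diff_eq Int_assoc)
  qed
  have off_T: "(\<Sum>i\<in>{..<n} - T. \<bar>x i\<bar>) = (\<Sum>i\<in>R. \<bar>x i\<bar>) + (\<Sum>i\<in>S - T. \<bar>x i\<bar>)"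
  proof -
    have "{..<n} - T = R \<union> (S - T)" using S_sub unfolding R_def by auto
    then show ?thesis using fin by (simp add: sum.union_disjoint R_def Diff_eq Int_assoc)
  qed
  have exchange: "(\<Sum>i\<in>T - S. \<bar>xt i\<bar>) \<le> (\<Sum>i\<in>S - T. \<bar>xt i\<bar>)"
    using fin same_size T_sub
    by (intro sum_le_sum_dominating) (auto simp: S_def intro: top_indices_dominate)
  have to_xt: "(\<Sum>i\<in>T - S. \<bar>x i\<bar>) \<le> (\<Sum>i\<in>T - S. \<bar>xt i\<bar>) + (\<Sum>i\<in>T - S. h i)"
    unfolding h_def sum.distrib[symmetric] by (intro sum_mono) auto
  have from_xt: "(\<Sum>i\<in>S - T. \<bar>xt i\<bar>) \<le> (\<Sum>i\<in>S - T. \<bar>x i\<bar>) + (\<Sum>i\<in>S - T. h i)"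
    unfolding h_def sum.distrib[symmetric] by (intro sum_mono) auto
  show ?thesis
    using l1norm_head_error[of n k xt x] l1norm_head_error[of n k x x]
      off_S off_T exchange to_xt from_xt
    unfolding S_def T_def h_def by simp
qed

lemma l1_small_set_le_lpnorm:
  assumes "A \<subseteq> {..<n}" "card A \<le> k" "p \<ge> 1"
  shows "(\<Sum>i\<in>A. \<bar>f i\<bar>) \<le> real k powr (1 - 1/p) * lpnorm n p f"
proof -
  have "finite A" using assms(1) finite_subset by blast
  then have "(\<Sum>i\<in>A. \<bar>f i\<bar>)
               \<le> real (card A) powr (1 - 1/p) * (\<Sum>i\<in>A. \<bar>f i\<bar> powr p) powr (1/p)"
    using l1_le_card_powr_lp assms(3) by blast
  also have "\<dots> \<le> real k powr (1 - 1/p) * (\<Sum>i<n. \<bar>f i\<bar> powr p) powr (1/p)"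
    using assms by (intro mult_mono powr_mono2 sum_mono2) (auto simp: sum_nonneg field_simps)
  finally show ?thesis unfolding lpnorm_def .
qed

theorem mainTheorem10:
  fixes n k :: nat and p \<epsilon> :: real and x xt :: "nat \<Rightarrow> real"
  assumes "1 \<le> p" "p \<le> 2" "\<epsilon> > 0" "1 \<le> k" "k \<le> n"
    and "lpnorm n p (\<lambda>i. xt i - x i)
           \<le> \<epsilon> * real k powr (1 / p - 1) * l1norm n (\<lambda>i. head n k x i - x i)"
  shows "l1norm n (\<lambda>i. head n k xt i - x i)
           \<le> (1 + 3 * \<epsilon>) * l1norm n (\<lambda>i. head n k x i - x i)"
proof -
  define S T where "S = top_indices n k xt" and "T = top_indices n k x"
  define \<sigma> where "\<sigma> = l1norm n (\<lambda>i. head n k x i - x i)"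
  have small: "(\<Sum>i\<in>A. \<bar>xt i - x i\<bar>) \<le> \<epsilon> * \<sigma>" if "A \<subseteq> S \<or> A \<subseteq> T" for A
  proof -
    have "A \<subseteq> {..<n}" "card A \<le> k"
      using that top_indices_subset card_top_indices[OF assms(5)] card_mono[of _ A]
      unfolding S_def T_def by (metis finite_lessThan finite_subset subset_trans)+
    then have "(\<Sum>i\<in>A. \<bar>xt i - x i\<bar>) \<le> real k powr (1 - 1/p) * lpnorm n p (\<lambda>i. xt i - x i)"
      using assms(1) by (rule l1_small_set_le_lpnorm)
    also have "\<dots> \<le> real k powr (1 - 1/p) * (\<epsilon> * real k powr (1/p - 1) * \<sigma>)"
      using assms(6) unfolding \<sigma>_def by (intro mult_left_mono) auto
    also have "\<dots> = \<epsilon> * \<sigma>" using assms(4) by (simp add: powr_add[symmetric])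
    finally show ?thesis .
  qed
  have "l1norm n (\<lambda>i. head n k xt i - x i) \<le> \<sigma> + 3 * (\<epsilon> * \<sigma>)"
    using head_error_perturbation[OF assms(5), of xt x] small[of S] small[of "T - S"] small[of "S - T"]
    unfolding S_def T_def \<sigma>_def by force
  then show ?thesis unfolding \<sigma>_def by (simp add: algebra_simps)
qed

end
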